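(* Let $X$ be a countable compact metric space and $\alpha$ an ordinal such that the Cantor–Bendixson derivative $X^{(\alpha+1)}$ consists of exactly one point $q$. Let $f\colon X\to X$ be an expansive homeomorphism. Then $f$ has a nontrivial homoclinic point: there exists $x\in X$, $x\neq q$, such that $f^n(x)\to q$ as $n\to+\infty$ and as $n\to-\infty$.
   Context: The Cantor–Bendixson derivatives are defined by $X^{(0)}=X$, $X^{(\beta+1)}$ = the set of non-isolated points of $X^{(\beta)}$, and $X^{(\lambda)}=\bigcap_{\beta<\lambda}X^{(\beta)}$ for limit $\lambda$. A homeomorphism $f$ of a metric space $(X,d)$ is expansive if there is $c>0$ such that for all $x\neq y$ there is $n\in\mathbb Z$ with $d(f^n(x),f^n(y))>c$. *)

theory Defs
  imports "HOL-Analysis.Analysis"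
begin

definition cb_deriv :: "'a::metric_space set \<Rightarrow> 'a set" where
  "cb_deriv Y = {x \<in> Y. x islimpt Y}"

text \<open>The family of all transfinite Cantor--Bendixson derivatives X^(beta), beta an ordinal.\<close>
inductive_set cb_iterates :: "'a::metric_space set \<Rightarrow> 'a set set" for X :: "'a set" where
  base: "X \<in> cb_iterates X"
| succ: "Y \<in> cb_iterates X \<Longrightarrow> cb_deriv Y \<in> cb_iterates X"
| lim: "F \<noteq> {} \<Longrightarrow> \<forall>Z\<in>F. Z \<in> cb_iterates X \<Longrightarrow> \<Inter>F \<in> cb_iterates X"

definition iter_int :: "('a \<Rightarrow> 'a) \<Rightarrow> ('a \<Rightarrow> 'a) \<Rightarrow> int \<Rightarrow> 'a \<Rightarrow> 'a" where
  "iter_int f g n = (if n \<ge> 0 then f ^^ nat n else g ^^ nat (- n))"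

definition expansive_on :: "'a::metric_space set \<Rightarrow> ('a \<Rightarrow> 'a) \<Rightarrow> ('a \<Rightarrow> 'a) \<Rightarrow> bool" where
  "expansive_on X f g \<longleftrightarrow> (\<exists>c>0. \<forall>x\<in>X. \<forall>y\<in>X. x \<noteq> y \<longrightarrow>
      (\<exists>n::int. dist (iter_int f g n x) (iter_int f g n y) > c))"

end

theory Submission
  imports Defs "HOL-Combinatorics.Orbits"
begin

text \<open>Let Y be the derivative with cb_deriv Y = {q}. It is compact, f and its inverse g
  restrict to a homeomorphism of Y, and Y has only finitely many points outside every ball
  around q; hence q is a common fixed point and every injective sequence in Y converges to q.
  So it suffices to find a point y \<noteq> q of Y that is not periodic (y \<notin> orbit f y): both
  of its half-orbits are injective. If every point of Y - {q} were periodic, expansivity (with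
  constant c, and q fixed) would make every such orbit meet the finite set Y - ball q c, so
  Y - {q} would be a finite union of finite orbits, contradicting that q is a limit point
  of Y.\<close>

lemma closed_cb_deriv:
  assumes "closed Y"
  shows "closed (cb_deriv Y)"
proof -
  have "cb_deriv Y = Y \<inter> {x. x islimpt Y}"
    unfolding cb_deriv_def by auto
  then show ?thesis
    using assms closed_limpts by (metis closed_Int)
qed

lemma compact_cb_deriv:
  assumes "compact Y"
  shows "compact (cb_deriv Y)"
  using compact_Int_closed[OF assms closed_cb_deriv[OF compact_imp_closed[OF assms]]]
  by (simp add: cb_deriv_def Int_absorb1)

lemma cb_deriv_image_subset:
  fixes f :: "'a::metric_space \<Rightarrow> 'a"
  assumes "continuous_on S f" "inj_on f S" "f ` S \<subseteq> S"
  shows "f ` cb_deriv S \<subseteq> cb_deriv S"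
proof
  fix y assume "y \<in> f ` cb_deriv S"
  then obtain x where x: "x \<in> S" "x islimpt S" and y: "y = f x"
    unfolding cb_deriv_def by blast
  obtain s where s: "\<And>n. s n \<in> S - {x}" "s \<longlonglongrightarrow> x"
    using x(2) islimpt_sequential by metis
  have "(f \<circ> s) \<longlonglongrightarrow> f x"
    using assms(1) x(1) s unfolding continuous_on_sequentially by blast
  moreover have "(f \<circ> s) n \<in> S - {f x}" for n
    using s(1)[of n] x(1) assms(2,3) by (auto simp: inj_on_def)
  ultimately have "f x islimpt S"
    using islimpt_sequential by blast
  then show "y \<in> cb_deriv S"
    using x(1) assms(3) y unfolding cb_deriv_def by blast
qed

lemma homeomorphism_restrict_invariant:
  assumes "homeomorphism S S f g" "T \<subseteq> S" "f ` T \<subseteq> T" "g ` T \<subseteq> T"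
  shows "homeomorphism T T f g"
proof (rule homeomorphism_of_subsets[OF assms(1,2) order_refl])
  have "y \<in> f ` T" if "y \<in> T" for y
    using that assms(2,4) homeomorphism_apply2[OF assms(1)] by (metis image_eqI subsetD)
  then show "f ` T = T"
    using assms(3) by blast
qed

lemma homeomorphism_cb_deriv:
  assumes "homeomorphism S S f g"
  shows "homeomorphism (cb_deriv S) (cb_deriv S) f g"
proof -
  have "f ` cb_deriv S \<subseteq> cb_deriv S" if "homeomorphism S S f g" for f g
  proof (rule cb_deriv_image_subset)
    show "continuous_on S f" "f ` S \<subseteq> S"
      using that by (auto simp: homeomorphism_def)
    show "inj_on f S"
      using that by (metis homeomorphism_apply1 inj_on_inverseI)
  qed
  then have "f ` cb_deriv S \<subseteq> cb_deriv S" "g ` cb_deriv S \<subseteq> cb_deriv S"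
    using assms homeomorphism_symD[OF assms] by blast+
  then show ?thesis
    by (intro homeomorphism_restrict_invariant[OF assms]) (auto simp: cb_deriv_def)
qed

lemma cb_iterates_subset:
  assumes "Z \<in> cb_iterates X"
  shows "Z \<subseteq> X"
  using assms by induction (auto simp: cb_deriv_def)

lemma compact_cb_iterates:
  fixes X :: "'a::metric_space set"
  assumes "Z \<in> cb_iterates X" "compact X"
  shows "compact Z"
  using assms(1)
proof induction
  case (lim F)
  then obtain Z where "Z \<in> F" "compact Z"
    by blast
  moreover have "closed (\<Inter>F)"
    using lim.IH by (simp add: closed_Inter compact_imp_closed)
  ultimately show ?case
    using compact_Int_closed[of Z "\<Inter>F"] by (metis Inter_lower inf.absorb2)
qed (use assms(2) compact_cb_deriv in auto)

lemma homeomorphism_cb_iterates: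
  assumes "Z \<in> cb_iterates X" "homeomorphism X X f g"
  shows "homeomorphism Z Z f g"
  using assms(1)
proof induction
  case (lim F)
  then have hom: "homeomorphism Z Z f g" if "Z \<in> F" for Z
    using that by blast
  then have "f ` Z = Z" "g ` Z = Z" if "Z \<in> F" for Z
    using that homeomorphism_image1 homeomorphism_image2 by blast+
  moreover obtain Z where "Z \<in> F"
    using lim.hyps by blast
  ultimately show ?case
    by (intro homeomorphism_restrict_invariant[OF hom[OF \<open>Z \<in> F\<close>]]) blast+
qed (use assms(2) homeomorphism_cb_deriv in auto)

lemma finite_diff_ball_if_cb_deriv_eq:
  assumes "compact Y" "cb_deriv Y = {q}" "e > 0"
  shows "finite (Y - ball q e)"
proof (rule ccontr)
  assume "infinite (Y - ball q e)"
  then obtain x where x: "x \<in> Y" "x islimpt (Y - ball q e)"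
    using assms(1) unfolding compact_eq_Bolzano_Weierstrass by blast
  then have "x = q"
    using assms(2) islimpt_subset[of x "Y - ball q e" Y] unfolding cb_deriv_def by blast
  then show False
    using x(2) assms(3) unfolding islimpt_approachable by (auto simp: dist_commute)
qed

lemma inj_tendsto_if_cb_deriv_eq:
  assumes "compact Y" "cb_deriv Y = {q}" "inj s" "range s \<subseteq> Y"
  shows "s \<longlonglongrightarrow> q"
proof (rule tendstoI)
  fix e :: real assume "e > 0"
  have "{n. \<not> dist (s n) q < e} \<subseteq> s -` (Y - ball q e)"
    using assms(4) by (auto simp: dist_commute image_subset_iff)
  moreover have "finite (s -` (Y - ball q e))"
    using finite_diff_ball_if_cb_deriv_eq[OF assms(1,2) \<open>e > 0\<close>] assms(3) by (rule finite_vimageI)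
  ultimately show "\<forall>\<^sub>F n in sequentially. dist (s n) q < e"
    unfolding cofinite_eq_sequentially[symmetric] eventually_cofinite by (rule finite_subset)
qed

lemma homeomorphism_fixes_cb_deriv_point:
  assumes "homeomorphism S S f g" "cb_deriv S = {q}"
  shows "f q = q"
  using homeomorphism_image1[OF homeomorphism_cb_deriv[OF assms(1)]] assms(2) by simp

lemma homeomorphism_funpow:
  assumes "homeomorphism S S f g"
  shows "homeomorphism S S (f ^^ n) (g ^^ n)"
proof (induction n)
  case 0
  then show ?case
    by (simp add: homeomorphism_def)
next
  case (Suc n)
  have "f ^^ Suc n = f ^^ n \<circ> f"
    by (rule funpow_Suc_right)
  moreover have "g ^^ Suc n = g \<circ> g ^^ n"
    by simp
  ultimately show ?case
    using homeomorphism_compose[OF assms Suc] by (simp only:)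
qed

lemma iter_int_in:
  assumes "homeomorphism S S f g" "y \<in> S"
  shows "iter_int f g n y \<in> S"
proof -
  have "(f ^^ k) y \<in> S" "(g ^^ k) y \<in> S" for k
    using homeomorphism_image1[OF homeomorphism_funpow[OF assms(1)]]
      homeomorphism_image2[OF homeomorphism_funpow[OF assms(1)]] assms(2) by blast+
  then show ?thesis
    unfolding iter_int_def by simp
qed

lemma iter_int_fixpoint:
  assumes "f q = q" "g q = q"
  shows "iter_int f g n q = q"
proof -
  have "(h ^^ m) q = q" if "h q = q" for h :: "'a \<Rightarrow> 'a" and m
    using that by (induction m) auto
  then show ?thesis
    using assms unfolding iter_int_def by simp
qed

lemma expansive_on_subset:
  assumes "expansive_on X f g" "Y \<subseteq> X"
  shows "expansive_on Y f g"
  using assms unfolding expansive_on_def by blast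

lemma expansive_orbit_leaves_ball:
  assumes "expansive_on S f g" "homeomorphism S S f g" "q \<in> S" "f q = q" "g q = q"
  obtains c where "c > 0" "\<And>y. y \<in> S - {q} \<Longrightarrow> \<exists>n. iter_int f g n y \<in> S - ball q c"
proof -
  obtain c where c: "c > 0"
    "\<And>x y. x \<in> S \<Longrightarrow> y \<in> S \<Longrightarrow> x \<noteq> y \<Longrightarrow> \<exists>n. c < dist (iter_int f g n x) (iter_int f g n y)"
    using assms(1) unfolding expansive_on_def by metis
  have "\<exists>n. iter_int f g n y \<in> S - ball q c" if "y \<in> S - {q}" for y
  proof -
    have "\<exists>n. c < dist (iter_int f g n y) (iter_int f g n q)"
      using c(2) that assms(3) by blast
    then obtain n where "c < dist (iter_int f g n y) q"
      by (auto simp: iter_int_fixpoint[where f = f and g = g, OF assms(4,5)])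
    then have "iter_int f g n y \<in> S - ball q c"
      using iter_int_in[OF assms(2)] that by (auto simp: dist_commute)
    then show ?thesis ..
  qed
  then show thesis
    using that c(1) by blast
qed

lemma self_in_orbit_iff: "y \<in> orbit f y \<longleftrightarrow> (\<exists>n>0. (f ^^ n) y = y)"
  by (auto simp: orbit_altdef) metis+

lemma self_in_orbit_of_iter_int:
  assumes "homeomorphism S S f g" "y \<in> S" "y \<in> orbit f y"
  shows "y \<in> orbit f (iter_int f g n y)"
proof (cases "n \<ge> 0")
  case True
  then have "iter_int f g n y \<in> orbit f y"
    using funpow_in_orbit[OF assms(3)] by (simp add: iter_int_def)
  then show ?thesis
    using assms(3) orbit_swap by metis
next
  case False
  then have "(f ^^ nat (- n)) (iter_int f g n y) = y" "nat (- n) > 0"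
    using homeomorphism_apply2[OF homeomorphism_funpow[OF assms(1)] assms(2)]
    by (auto simp: iter_int_def)
  then show ?thesis
    by (auto simp: orbit_altdef intro!: exI[of _ "nat (- n)"])
qed

lemma self_in_orbit_inverse:
  assumes "homeomorphism S S f g" "y \<in> S" "y \<in> orbit g y"
  shows "y \<in> orbit f y"
proof -
  obtain n where "n > 0" "(g ^^ n) y = y"
    using assms(3) self_in_orbit_iff by metis
  then have "(f ^^ n) y = y"
    using homeomorphism_apply2[OF homeomorphism_funpow[OF assms(1)] assms(2)] by metis
  then show ?thesis
    using \<open>n > 0\<close> self_in_orbit_iff by metis
qed

lemma inj_funpow_if_not_in_orbit:
  assumes "homeomorphism S S f g" "y \<in> S" "y \<notin> orbit f y"
  shows "inj (\<lambda>n. (f ^^ n) y)"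
proof (rule linorder_injI)
  fix a b :: nat assume "a < b"
  have "y = (f ^^ (b - a)) y" if "(f ^^ a) y = (f ^^ b) y"
  proof -
    have "(f ^^ b) y = (f ^^ a) ((f ^^ (b - a)) y)"
      using \<open>a < b\<close> by (metis funpow_add comp_apply le_add_diff_inverse less_imp_le_nat)
    then have "(f ^^ a) y = (f ^^ a) ((f ^^ (b - a)) y)"
      using that by simp
    moreover have "(f ^^ (b - a)) y \<in> S"
      using homeomorphism_image1[OF homeomorphism_funpow[OF assms(1)]] assms(2) by blast
    ultimately show ?thesis
      using homeomorphism_apply1[OF homeomorphism_funpow[OF assms(1)]] assms(2) by metis
  qed
  then show "(f ^^ a) y \<noteq> (f ^^ b) y"
    using assms(3) \<open>a < b\<close> self_in_orbit_iff by (metis zero_less_diff)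
qed

lemma expansive_exists_aperiodic_point:
  assumes "compact S" "cb_deriv S = {q}" "homeomorphism S S f g" "expansive_on S f g"
  shows "\<exists>y\<in>S - {q}. y \<notin> orbit f y"
proof (rule ccontr)
  assume "\<not> ?thesis"
  then have periodic: "y \<in> orbit f y" if "y \<in> S - {q}" for y
    using that by blast
  have q: "q \<in> S" "q islimpt S"
    using assms(2) unfolding cb_deriv_def by auto
  have "f q = q" "g q = q"
    using homeomorphism_fixes_cb_deriv_point assms(2) assms(3) homeomorphism_symD[OF assms(3)] by blast+
  then obtain c where c: "c > 0" "\<And>y. y \<in> S - {q} \<Longrightarrow> \<exists>n. iter_int f g n y \<in> S - ball q c"
    using expansive_orbit_leaves_ball assms(3,4) q(1) by metis
  have "S - {q} \<subseteq> (\<Union>z\<in>S - ball q c. orbit f z)"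
    using c(2) periodic self_in_orbit_of_iter_int[OF assms(3)] by blast
  moreover have "finite (\<Union>z\<in>S - ball q c. orbit f z)"
  proof (rule finite_UN_I)
    show "finite (S - ball q c)"
      using finite_diff_ball_if_cb_deriv_eq assms(1,2) c(1) by blast
    show "finite (orbit f z)" if "z \<in> S - ball q c" for z
      using that c(1) by (intro finite_orbit periodic) auto
  qed
  ultimately have "finite (S - {q})"
    by (rule finite_subset)
  then have "finite S"
    by simp
  then show False
    using q(2) islimpt_finite by blast
qed

theorem mainTheorem16:
  fixes X :: "'a::metric_space set" and f g :: "'a \<Rightarrow> 'a" and q :: 'a
  assumes "countable X" and "compact X"
    and "\<exists>Y\<in>cb_iterates X. cb_deriv Y = {q}"
    and "homeomorphism X X f g"
    and "expansive_on X f g"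
  shows "\<exists>x\<in>X. x \<noteq> q \<and> (\<lambda>n. (f ^^ n) x) \<longlonglongrightarrow> q \<and> (\<lambda>n. (g ^^ n) x) \<longlonglongrightarrow> q"
proof -
  obtain Y where Y: "Y \<in> cb_iterates X" "cb_deriv Y = {q}"
    using assms(3) by blast
  have "Y \<subseteq> X" "compact Y" and hY: "homeomorphism Y Y f g"
    using cb_iterates_subset[OF Y(1)] compact_cb_iterates[OF Y(1) assms(2)]
      homeomorphism_cb_iterates[OF Y(1) assms(4)] by simp_all
  obtain y where y: "y \<in> Y - {q}" "y \<notin> orbit f y"
    using expansive_exists_aperiodic_point[OF \<open>compact Y\<close> Y(2) hY]
      expansive_on_subset[OF assms(5) \<open>Y \<subseteq> X\<close>] by blast
  have "inj (\<lambda>n. (f ^^ n) y)" "inj (\<lambda>n. (g ^^ n) y)"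
    using inj_funpow_if_not_in_orbit[OF hY] inj_funpow_if_not_in_orbit[OF homeomorphism_symD[OF hY]]
      self_in_orbit_inverse[OF hY] y by blast+
  moreover have "range (\<lambda>n. (f ^^ n) y) \<subseteq> Y" "range (\<lambda>n. (g ^^ n) y) \<subseteq> Y"
    using homeomorphism_image1[OF homeomorphism_funpow[OF hY]]
      homeomorphism_image2[OF homeomorphism_funpow[OF hY]] y(1) by blast+
  ultimately show ?thesis
    using inj_tendsto_if_cb_deriv_eq[OF \<open>compact Y\<close> Y(2)] y(1) \<open>Y \<subseteq> X\<close> by blast
qed

end
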